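(* Let $\mathfrak{G}=(Y,R,E)$ be a descriptive $\mathsf{MS4}$-frame and $Q=E\circ R$. Then $\mathfrak{G}\vDash\mathsf{LKur}$ if and only if there is no morphism of descriptive $\mathsf{MS4}$-frames from a closed $Q$-upset of $\mathfrak{G}$ onto $\mathfrak{K}$, where $\mathfrak{K}=(\{a,b\},R,E)$ is the (discrete) frame with $R[a]=\{a,b\}$, $R[b]=\{b\}$, $E[a]=E[b]=\{a,b\}$.
   Context: $\mathsf{MS4}$ is the smallest set of formulas in the classical bimodal language $\mathcal{L}_{\Box\forall}$ containing all classical tautologies, the $\mathsf{S4}$ axioms for $\Box$, the $\mathsf{S5}$ axioms for $\forall$, and $\Box\forall p\to\forall\Box p$, closed under modus ponens, substitution, $\Box$- and $\forall$-necessitation; $\Diamond=\neg\Box\neg$. $\mathsf{LKur}=\mathsf{MS4}+\Box\forall\Diamond\Box p\to\Diamond\forall p$. A descriptive $\mathsf{MS4}$-frame is $(Y,R,E)$ with $Y$ a Stone space, $R$ a continuous quasi-order, $E$ a continuous equivalence relation (continuous: $R[x]=\{y:xRy\}$ closed for all $x$, $R^{-1}[U]$ clopen for clopen $U$), such that $xEy$, $yRz$ imply $\exists u$ with $xRu$, $uEz$. Valuations assign clopen sets; $\Box$ via $R$, $\forall$ via $E$. $x(E\circ R)y$ iff there is $z$ with $xRz$ and $zEy$. A $Q$-upset is $U$ with $x\in U$, $xQy\Rightarrow y\in U$; a closed $Q$-upset is regarded as a descriptive $\mathsf{MS4}$-frame with the subspace topology and restricted relations. A morphism of descriptive $\mathsf{MS4}$-frames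 $f:(Y_1,R_1,E_1)\to(Y_2,R_2,E_2)$ is a continuous map with $R_2[f(x)]=f[R_1[x]]$ and $E_2[f(x)]=f[E_1[x]]$ for all $x\in Y_1$. *)

theory Defs
  imports "HOL-Analysis.Analysis"
begin

definition clopenin :: "'a topology \<Rightarrow> 'a set \<Rightarrow> bool" where
  "clopenin X U \<longleftrightarrow> openin X U \<and> closedin X U"

definition stone_space :: "'a topology \<Rightarrow> bool" where
  "stone_space X \<longleftrightarrow> compact_space X \<and> Hausdorff_space X \<and>
     (\<forall>U. openin X U \<longrightarrow> U = \<Union>{V. clopenin X V \<and> V \<subseteq> U})"

definition continuous_rel :: "'a topology \<Rightarrow> 'a rel \<Rightarrow> bool" where
  "continuous_rel X S \<longleftrightarrow>
     (\<forall>x\<in>topspace X. closedin X (S `` {x})) \<and>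
     (\<forall>U. clopenin X U \<longrightarrow> clopenin X ((S\<inverse>) `` U))"

definition descriptive_MS4_frame :: "'a topology \<Rightarrow> 'a rel \<Rightarrow> 'a rel \<Rightarrow> bool" where
  "descriptive_MS4_frame X R E \<longleftrightarrow>
     stone_space X \<and>
     R \<subseteq> topspace X \<times> topspace X \<and> preorder_on (topspace X) R \<and>
     equiv (topspace X) E \<and>
     continuous_rel X R \<and> continuous_rel X E \<and>
     (\<forall>x y z. (x, y) \<in> E \<longrightarrow> (y, z) \<in> R \<longrightarrow> (\<exists>u. (x, u) \<in> R \<and> (u, z) \<in> E))"

datatype fm = Var nat | Bot | Imp fm fm | Box fm | All fm

definition Neg :: "fm \<Rightarrow> fm" where "Neg p = Imp p Bot"
definition Dia :: "fm \<Rightarrow> fm" where "Dia p = Neg (Box (Neg p))"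

fun peval :: "(fm \<Rightarrow> bool) \<Rightarrow> fm \<Rightarrow> bool" where
  "peval g (Var n) = g (Var n)"
| "peval g Bot = False"
| "peval g (Imp p q) = (peval g p \<longrightarrow> peval g q)"
| "peval g (Box p) = g (Box p)"
| "peval g (All p) = g (All p)"

definition tautology :: "fm \<Rightarrow> bool" where
  "tautology p \<longleftrightarrow> (\<forall>g. peval g p)"

fun subst :: "(nat \<Rightarrow> fm) \<Rightarrow> fm \<Rightarrow> fm" where
  "subst s (Var n) = s n"
| "subst s Bot = Bot"
| "subst s (Imp p q) = Imp (subst s p) (subst s q)"
| "subst s (Box p) = Box (subst s p)"
| "subst s (All p) = All (subst s p)"

abbreviation "pp \<equiv> Var 0"
abbreviation "qq \<equiv> Var 1"

definition MS4_axioms :: "fm set" where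
  "MS4_axioms = {
     Imp (Box (Imp pp qq)) (Imp (Box pp) (Box qq)),
     Imp (Box pp) pp,
     Imp (Box pp) (Box (Box pp)),
     Imp (All (Imp pp qq)) (Imp (All pp) (All qq)),
     Imp (All pp) pp,
     Imp (All pp) (All (All pp)),
     Imp (Neg (All pp)) (All (Neg (All pp))),
     Imp (Box (All pp)) (All (Box pp))}"

definition kur_axiom :: fm where
  "kur_axiom = Imp (Box (All (Dia (Box pp)))) (Dia (All pp))"

inductive_set logic :: "fm set \<Rightarrow> fm set" for A :: "fm set" where
  taut: "tautology p \<Longrightarrow> p \<in> logic A"
| ax: "p \<in> MS4_axioms \<Longrightarrow> p \<in> logic A"
| extra: "p \<in> A \<Longrightarrow> p \<in> logic A"
| mp: "p \<in> logic A \<Longrightarrow> Imp p q \<in> logic A \<Longrightarrow> q \<in> logic A"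
| sub: "p \<in> logic A \<Longrightarrow> subst s p \<in> logic A"
| nec_box: "p \<in> logic A \<Longrightarrow> Box p \<in> logic A"
| nec_all: "p \<in> logic A \<Longrightarrow> All p \<in> logic A"

definition MS4 :: "fm set" where "MS4 = logic {}"
definition LKur :: "fm set" where "LKur = logic {kur_axiom}"

fun sem :: "'a topology \<Rightarrow> 'a rel \<Rightarrow> 'a rel \<Rightarrow> (nat \<Rightarrow> 'a set) \<Rightarrow> fm \<Rightarrow> 'a set" where
  "sem X R E V (Var n) = V n"
| "sem X R E V Bot = {}"
| "sem X R E V (Imp p q) = (topspace X - sem X R E V p) \<union> sem X R E V q"
| "sem X R E V (Box p) = {x \<in> topspace X. R `` {x} \<subseteq> sem X R E V p}"
| "sem X R E V (All p) = {x \<in> topspace X. E `` {x} \<subseteq> sem X R E V p}"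

definition frame_valid :: "'a topology \<Rightarrow> 'a rel \<Rightarrow> 'a rel \<Rightarrow> fm \<Rightarrow> bool" where
  "frame_valid X R E p \<longleftrightarrow>
     (\<forall>V. (\<forall>n. clopenin X (V n)) \<longrightarrow> sem X R E V p = topspace X)"

definition frame_validates :: "'a topology \<Rightarrow> 'a rel \<Rightarrow> 'a rel \<Rightarrow> fm set \<Rightarrow> bool" where
  "frame_validates X R E L \<longleftrightarrow> (\<forall>p\<in>L. frame_valid X R E p)"

definition closed_upset :: "'a topology \<Rightarrow> 'a rel \<Rightarrow> 'a set \<Rightarrow> bool" where
  "closed_upset X Q U \<longleftrightarrow> closedin X U \<and>
     (\<forall>x y. x \<in> U \<longrightarrow> (x, y) \<in> Q \<longrightarrow> y \<in> U)"

definition frame_morphism_from ::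
  "'a topology \<Rightarrow> 'a rel \<Rightarrow> 'a rel \<Rightarrow> 'a set \<Rightarrow> 'b topology \<Rightarrow> 'b rel \<Rightarrow> 'b rel \<Rightarrow> ('a \<Rightarrow> 'b) \<Rightarrow> bool" where
  "frame_morphism_from X1 R1 E1 U X2 R2 E2 f \<longleftrightarrow>
     continuous_map (subtopology X1 U) X2 f \<and>
     (\<forall>x\<in>U. R2 `` {f x} = f ` (R1 `` {x} \<inter> U)) \<and>
     (\<forall>x\<in>U. E2 `` {f x} = f ` (E1 `` {x} \<inter> U))"

datatype kpt = Ka | Kb

definition K_top :: "kpt topology" where "K_top = discrete_topology UNIV"
definition K_R :: "kpt rel" where "K_R = {(Ka, Ka), (Ka, Kb), (Kb, Kb)}"
definition K_E :: "kpt rel" where "K_E = UNIV"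

end

theory Submission
  imports Defs
begin

(* Kuroda's axiom fails at x under a clopen valuation P exactly when every point Q-above x has an
   R-successor whose whole R-cone lies in P, while every R-successor of x is E-related to a point
   outside P. Given such a refutation, pick such a point w above x itself. The map sending the
   clopen set [[Box p]] to b and its complement to a is then a morphism onto K from the Q-upset Q[w],
   which is closed because in a Stone space the E-saturation of a closed set is closed. Conversely,
   if f maps a closed Q-upset onto K, a clopen P separating the closed fibres over b and over a,
   together with any point over a, refutes the axiom. Finally, LKur is sound on descriptive frames,
   so it is valid exactly when Kuroda's axiom is. *)

lemma clopenin_diff_topspace: "clopenin X T \<Longrightarrow> clopenin X (topspace X - T)"
  unfolding clopenin_def by auto

lemma clopenin_subset_topspace: "clopenin X U \<Longrightarrow> U \<subseteq> topspace X"
  by (simp add: clopenin_def openin_subset)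

lemma stone_space_separation:
  assumes X: "stone_space X" and A: "closedin X A" and B: "closedin X B" and AB: "A \<inter> B = {}"
  obtains C where "clopenin X C" "A \<subseteq> C" "C \<inter> B = {}"
proof -
  let ?\<C> = "{C. clopenin X C \<and> C \<inter> B = {}}"
  have "compactin X A"
    using X A closedin_compact_space stone_space_def by blast
  moreover have "A \<subseteq> \<Union>?\<C>"
  proof
    fix a assume "a \<in> A"
    then have "a \<in> topspace X - B"
      using AB A closedin_subset by blast
    moreover have "topspace X - B = \<Union>{C. clopenin X C \<and> C \<subseteq> topspace X - B}"
      using X B unfolding stone_space_def by blast
    ultimately show "a \<in> \<Union>?\<C>" by blast
  qed
  moreover have "\<forall>C\<in>?\<C>. openin X C"
    by (auto simp: clopenin_def)
  ultimately obtain \<F> where \<F>: "finite \<F>" "\<F> \<subseteq> ?\<C>" "A \<subseteq> \<Union>\<F>"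
    unfolding compactin_def by meson
  have "clopenin X (\<Union>\<F>)"
    unfolding clopenin_def
  proof
    show "openin X (\<Union>\<F>)"
      using \<F> by (auto simp: clopenin_def)
    show "closedin X (\<Union>\<F>)"
      by (rule closedin_Union) (use \<F> in \<open>auto simp: clopenin_def\<close>)
  qed
  with \<F> that show thesis by blast
qed

lemma UNIV_kpt: "(UNIV :: kpt set) = {Ka, Kb}"
  using kpt.exhaust by blast

lemma UNIV_kpt_eq_iff: "UNIV = A \<longleftrightarrow> Ka \<in> A \<and> Kb \<in> A"
  by (metis UNIV_I UNIV_eq_I kpt.exhaust)

lemma K_R_Image: "K_R `` {Ka} = UNIV" "K_R `` {Kb} = {Kb}"
  by (auto simp: K_R_def UNIV_kpt)

lemma continuous_map_K_top_iff:
  "continuous_map Y K_top f \<longleftrightarrow> (\<forall>k. closedin Y {x \<in> topspace Y. f x = k})"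
proof
  assume "continuous_map Y K_top f"
  then have "closedin Y {x \<in> topspace Y. f x \<in> {k}}" for k
    unfolding continuous_map_closedin K_top_def by (simp only: closedin_discrete_topology subset_UNIV)
  then show "\<forall>k. closedin Y {x \<in> topspace Y. f x = k}"
    by simp
next
  assume fibres: "\<forall>k. closedin Y {x \<in> topspace Y. f x = k}"
  have "closedin Y {x \<in> topspace Y. f x \<in> C}" for C
  proof -
    have "{x \<in> topspace Y. f x \<in> C} = \<Union>((\<lambda>k. {x \<in> topspace Y. f x = k}) ` C)"
      by blast
    moreover have "finite C"
      using finite_subset[OF subset_UNIV] UNIV_kpt by (metis finite.emptyI finite_insert)
    ultimately show ?thesis
      using fibres by (metis (no_types, lifting) closedin_Union finite_imageI imageE)
  qed
  then show "continuous_map Y K_top f"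
    unfolding continuous_map_closedin K_top_def by simp
qed

lemma continuous_map_indicator_K:
  assumes "clopenin X S"
  shows "continuous_map (subtopology X U) K_top (\<lambda>x. if x \<in> S then Kb else Ka)"
  unfolding continuous_map_K_top_iff
proof
  fix k
  have "{x \<in> topspace (subtopology X U). (if x \<in> S then Kb else Ka) = k} =
      U \<inter> (if k = Kb then S else topspace X - S)"
    using clopenin_subset_topspace[OF assms] by (cases k) auto
  moreover have "closedin X (if k = Kb then S else topspace X - S)"
    using assms clopenin_diff_topspace unfolding clopenin_def by auto
  ultimately show "closedin (subtopology X U) {x \<in> topspace (subtopology X U). (if x \<in> S then Kb else Ka) = k}"
    by (simp add: closedin_subtopology_Int_closed)
qed

lemma closedin_fibre_K:
  assumes "closedin X U" "continuous_map (subtopology X U) K_top f"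
  shows "closedin X {x \<in> U. f x = k}"
proof -
  have "closedin (subtopology X U) {x \<in> U. f x = k}"
    using assms closedin_subset unfolding continuous_map_K_top_iff by (metis topspace_subtopology_subset)
  then show ?thesis
    using assms(1) closedin_closed_subtopology by blast
qed

lemma closed_upset_subset_topspace: "closed_upset X Q U \<Longrightarrow> U \<subseteq> topspace X"
  unfolding closed_upset_def using closedin_subset by blast

definition kur_refutation :: "'a topology \<Rightarrow> 'a rel \<Rightarrow> 'a rel \<Rightarrow> 'a set \<Rightarrow> 'a \<Rightarrow> bool" where
  "kur_refutation X R E P x \<longleftrightarrow> clopenin X P \<and> x \<in> topspace X \<and>
     (\<forall>z \<in> (R O E) `` {x}. \<exists>w \<in> R `` {z}. R `` {w} \<subseteq> P) \<and>
     (\<forall>y \<in> R `` {x}. \<not> E `` {y} \<subseteq> P)"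

lemma sem_subset_topspace: "(\<And>n. V n \<subseteq> topspace X) \<Longrightarrow> sem X R E V p \<subseteq> topspace X"
  by (induction p) auto

lemma sem_peval: "x \<in> topspace X \<Longrightarrow> x \<in> sem X R E V p \<longleftrightarrow> peval (\<lambda>q. x \<in> sem X R E V q) p"
  by (induction p) auto

lemma sem_subst: "sem X R E V (subst s p) = sem X R E (\<lambda>n. sem X R E V (s n)) p"
  by (induction p) auto

locale descriptive_MS4 =
  fixes X :: "'a topology" and R E :: "'a rel"
  assumes descriptive: "descriptive_MS4_frame X R E"
begin

lemma stone: "stone_space X"
  using descriptive by (simp add: descriptive_MS4_frame_def)

lemma R_field: "(x, y) \<in> R \<Longrightarrow> x \<in> topspace X \<and> y \<in> topspace X"
  using descriptive by (auto simp: descriptive_MS4_frame_def)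

lemma E_field: "(x, y) \<in> E \<Longrightarrow> x \<in> topspace X \<and> y \<in> topspace X"
  using descriptive by (auto simp: descriptive_MS4_frame_def equiv_def refl_on_def)

lemma R_refl: "x \<in> topspace X \<Longrightarrow> (x, x) \<in> R"
  using descriptive by (auto simp: descriptive_MS4_frame_def preorder_on_def refl_on_def)

lemma R_trans: "(x, y) \<in> R \<Longrightarrow> (y, z) \<in> R \<Longrightarrow> (x, z) \<in> R"
  using descriptive by (auto simp: descriptive_MS4_frame_def preorder_on_def dest: transD)

lemma E_refl: "x \<in> topspace X \<Longrightarrow> (x, x) \<in> E"
  using descriptive by (auto simp: descriptive_MS4_frame_def equiv_def refl_on_def)

lemma E_sym: "(x, y) \<in> E \<Longrightarrow> (y, x) \<in> E"
  using descriptive by (auto simp: descriptive_MS4_frame_def equiv_def dest: symD)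

lemma E_trans: "(x, y) \<in> E \<Longrightarrow> (y, z) \<in> E \<Longrightarrow> (x, z) \<in> E"
  using descriptive by (auto simp: descriptive_MS4_frame_def equiv_def dest: transD)

lemma E_R_commute: "(x, y) \<in> E \<Longrightarrow> (y, z) \<in> R \<Longrightarrow> \<exists>u. (x, u) \<in> R \<and> (u, z) \<in> E"
  using descriptive by (simp add: descriptive_MS4_frame_def)

lemma closedin_R_Image_singleton: "x \<in> topspace X \<Longrightarrow> closedin X (R `` {x})"
  using descriptive by (simp add: descriptive_MS4_frame_def continuous_rel_def)

lemma closedin_E_Image_singleton: "x \<in> topspace X \<Longrightarrow> closedin X (E `` {x})"
  using descriptive by (simp add: descriptive_MS4_frame_def continuous_rel_def)

lemma clopenin_R_vimage: "clopenin X U \<Longrightarrow> clopenin X (R\<inverse> `` U)"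
  using descriptive by (simp add: descriptive_MS4_frame_def continuous_rel_def)

lemma clopenin_E_vimage: "clopenin X U \<Longrightarrow> clopenin X (E\<inverse> `` U)"
  using descriptive by (simp add: descriptive_MS4_frame_def continuous_rel_def)

lemma closedin_E_Image:
  assumes A: "closedin X A"
  shows "closedin X (E `` A)"
proof -
  have "\<exists>T. openin X T \<and> y \<in> T \<and> T \<subseteq> topspace X - E `` A" if y: "y \<in> topspace X - E `` A" for y
  proof -
    have "A \<inter> E `` {y} = {}"
      using y by (blast dest: E_sym)
    then obtain C where C: "clopenin X C" "A \<subseteq> C" "C \<inter> E `` {y} = {}"
      using stone_space_separation[OF stone A closedin_E_Image_singleton] y by blast
    let ?T = "topspace X - E\<inverse> `` C"
    have "openin X ?T"
      using clopenin_E_vimage[OF C(1)] by (auto simp: clopenin_def)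
    moreover have "y \<in> ?T"
      using y C(3) by auto
    moreover have "?T \<subseteq> topspace X - E `` A"
    proof (intro subsetI DiffI)
      fix t assume t: "t \<in> ?T"
      then show "t \<in> topspace X" by blast
      show "t \<notin> E `` A"
      proof
        assume "t \<in> E `` A"
        then obtain a where "a \<in> A" "(t, a) \<in> E"
          using E_sym by blast
        then show False
          using t C(2) by blast
      qed
    qed
    ultimately show ?thesis by blast
  qed
  moreover have "E `` A \<subseteq> topspace X"
    using E_field by blast
  ultimately show ?thesis
    unfolding closedin_def openin_subopen[of X "topspace X - E `` A"] by blast
qed

lemma closed_upset_R_closed:
  assumes "closed_upset X (R O E) U" "x \<in> U" "(x, y) \<in> R"
  shows "y \<in> U"
  using assms E_refl R_field unfolding closed_upset_def by blast

lemma closed_upset_Image: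
  assumes "w \<in> topspace X"
  shows "closed_upset X (R O E) ((R O E) `` {w})"
  unfolding closed_upset_def
proof
  show "closedin X ((R O E) `` {w})"
    unfolding relcomp_Image using closedin_E_Image[OF closedin_R_Image_singleton[OF assms]] .
  show "\<forall>x y. x \<in> (R O E) `` {w} \<longrightarrow> (x, y) \<in> R O E \<longrightarrow> y \<in> (R O E) `` {w}"
  proof (intro allI impI)
    fix x y assume "x \<in> (R O E) `` {w}" "(x, y) \<in> R O E"
    then obtain v u where "(w, v) \<in> R" "(v, x) \<in> E" "(x, u) \<in> R" "(u, y) \<in> E"
      by blast
    moreover obtain t where "(v, t) \<in> R" "(t, u) \<in> E"
      using E_R_commute calculation(2,3) by blast
    ultimately show "y \<in> (R O E) `` {w}"
      using R_trans E_trans by blast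
  qed
qed

lemma sem_Box: "sem X R E V (Box p) = topspace X - R\<inverse> `` (topspace X - sem X R E V p)"
  using R_field by auto

lemma sem_All: "sem X R E V (All p) = topspace X - E\<inverse> `` (topspace X - sem X R E V p)"
  using E_field by auto

lemma clopenin_sem:
  assumes "\<And>n. clopenin X (V n)"
  shows "clopenin X (sem X R E V p)"
proof (induction p)
  case (Var n)
  then show ?case using assms by simp
next
  case Bot
  then show ?case by (simp add: clopenin_def)
next
  case (Imp p q)
  then show ?case by (auto simp: clopenin_def)
next
  case (Box p)
  then show ?case
    unfolding sem_Box by (intro clopenin_diff_topspace clopenin_R_vimage)
next
  case (All p)
  then show ?case
    unfolding sem_All by (intro clopenin_diff_topspace clopenin_E_vimage)
qed

lemma frame_valid_MS4_axiom:
  assumes "p \<in> MS4_axioms"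
  shows "frame_valid X R E p"
  unfolding frame_valid_def
proof (intro allI impI)
  fix V :: "nat \<Rightarrow> 'a set"
  assume "\<forall>n. clopenin X (V n)"
  then have V: "\<And>n. V n \<subseteq> topspace X"
    by (simp add: clopenin_subset_topspace)
  have "topspace X \<subseteq> sem X R E V p"
    using assms V unfolding MS4_axioms_def Neg_def
    apply (elim insertE emptyE)
    subgoal by auto
    subgoal using R_refl by auto
    subgoal by (auto dest: R_field intro: R_trans)
    subgoal by auto
    subgoal using E_refl by auto
    subgoal by (auto dest: E_field intro: E_trans)
    subgoal by (auto dest: E_field) (metis E_sym E_trans Image_singleton_iff subsetD)
    subgoal by (fastforce dest: E_R_commute R_field E_field)
    done
  then show "sem X R E V p = topspace X"
    using sem_subset_topspace[of V, OF V] by blast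
qed

lemma frame_valid_logic:
  assumes "p \<in> logic A" and valid_A: "\<And>q. q \<in> A \<Longrightarrow> frame_valid X R E q"
  shows "frame_valid X R E p"
  using assms(1) unfolding frame_valid_def
proof (induction p rule: logic.induct)
  case (taut p)
  show ?case
  proof (intro allI impI)
    fix V :: "nat \<Rightarrow> 'a set"
    assume "\<forall>n. clopenin X (V n)"
    then have "sem X R E V p \<subseteq> topspace X"
      by (intro sem_subset_topspace) (simp add: clopenin_subset_topspace)
    moreover have "topspace X \<subseteq> sem X R E V p"
      using sem_peval[of _ X R E V p] taut.hyps unfolding tautology_def by blast
    ultimately show "sem X R E V p = topspace X" by blast
  qed
next
  case (ax p)
  then show ?case
    using frame_valid_MS4_axiom unfolding frame_valid_def by blast
next
  case (extra p)
  then show ?case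
    using valid_A unfolding frame_valid_def by blast
next
  case (mp p q)
  then show ?case by auto
next
  case (sub p s)
  show ?case
  proof (intro allI impI)
    fix V :: "nat \<Rightarrow> 'a set"
    assume "\<forall>n. clopenin X (V n)"
    then have "\<forall>n. clopenin X (sem X R E V (s n))"
      by (simp add: clopenin_sem)
    then show "sem X R E V (subst s p) = topspace X"
      using sub.IH by (simp add: sem_subst)
  qed
next
  case (nec_box p)
  then show ?case
    using R_field by auto
next
  case (nec_all p)
  then show ?case
    using E_field by auto
qed

lemma frame_validates_LKur_iff: "frame_validates X R E LKur \<longleftrightarrow> frame_valid X R E kur_axiom"
proof
  assume "frame_validates X R E LKur"
  moreover have "kur_axiom \<in> LKur"
    unfolding LKur_def by (simp add: logic.extra)
  ultimately show "frame_valid X R E kur_axiom"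
    unfolding frame_validates_def by blast
next
  assume "frame_valid X R E kur_axiom"
  then show "frame_validates X R E LKur"
    unfolding frame_validates_def LKur_def using frame_valid_logic by blast
qed

lemma sem_Dia: "sem X R E V (Dia p) = {x \<in> topspace X. \<exists>y \<in> R `` {x}. y \<in> sem X R E V p}"
  using R_field by (auto simp: Dia_def Neg_def)

lemma notin_sem_kur_axiom_iff:
  "x \<in> topspace X - sem X R E V kur_axiom \<longleftrightarrow> x \<in> topspace X \<and>
     (\<forall>z \<in> (R O E) `` {x}. \<exists>w \<in> R `` {z}. R `` {w} \<subseteq> V 0) \<and>
     (\<forall>y \<in> R `` {x}. \<not> E `` {y} \<subseteq> V 0)"
  using R_field E_field by (auto simp: kur_axiom_def sem_Dia) blast

lemma not_frame_valid_kur_axiom_iff: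
  "\<not> frame_valid X R E kur_axiom \<longleftrightarrow> (\<exists>P x. kur_refutation X R E P x)"
proof
  assume "\<not> frame_valid X R E kur_axiom"
  then obtain V where V: "\<forall>n. clopenin X (V n)" and "sem X R E V kur_axiom \<noteq> topspace X"
    unfolding frame_valid_def by blast
  moreover have "sem X R E V kur_axiom \<subseteq> topspace X"
    using V by (intro sem_subset_topspace) (simp add: clopenin_subset_topspace)
  ultimately obtain x where "x \<in> topspace X - sem X R E V kur_axiom"
    by blast
  then have "kur_refutation X R E (V 0) x"
    unfolding kur_refutation_def notin_sem_kur_axiom_iff using V by blast
  then show "\<exists>P x. kur_refutation X R E P x" by blast
next
  assume "\<exists>P x. kur_refutation X R E P x"
  then obtain P x where "kur_refutation X R E P x" by blast
  then have "clopenin X P" and "x \<in> topspace X - sem X R E (\<lambda>_. P) kur_axiom"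
    unfolding kur_refutation_def notin_sem_kur_axiom_iff by simp_all
  then show "\<not> frame_valid X R E kur_axiom"
    unfolding frame_valid_def by (metis Diff_iff)
qed

lemma frame_morphism_to_K_iff:
  assumes U: "U \<subseteq> topspace X"
  shows "frame_morphism_from X R E U K_top K_R K_E f \<longleftrightarrow>
    continuous_map (subtopology X U) K_top f \<and>
    (\<forall>x \<in> U. \<forall>y \<in> R `` {x} \<inter> U. f x = Kb \<longrightarrow> f y = Kb) \<and>
    (\<forall>x \<in> U. \<exists>y \<in> R `` {x} \<inter> U. f y = Kb) \<and>
    (\<forall>x \<in> U. f ` (E `` {x} \<inter> U) = UNIV)"
proof -
  have R_condition: "K_R `` {f x} = f ` (R `` {x} \<inter> U) \<longleftrightarrow>
      (\<forall>y \<in> R `` {x} \<inter> U. f x = Kb \<longrightarrow> f y = Kb) \<and> (\<exists>y \<in> R `` {x} \<inter> U. f y = Kb)"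
    if x: "x \<in> U" for x
  proof -
    have x_succ: "x \<in> R `` {x} \<inter> U"
      using x U R_refl by blast
    show ?thesis
    proof (cases "f x")
      case Ka
      then have "Ka \<in> f ` (R `` {x} \<inter> U)"
        using x_succ by (metis imageI)
      then have "K_R `` {f x} = f ` (R `` {x} \<inter> U) \<longleftrightarrow> Kb \<in> f ` (R `` {x} \<inter> U)"
        using Ka by (simp add: K_R_Image UNIV_kpt_eq_iff)
      also have "\<dots> \<longleftrightarrow> (\<exists>y \<in> R `` {x} \<inter> U. f y = Kb)"
        by force
      finally show ?thesis
        using Ka by simp
    next
      case Kb
      then show ?thesis
        using x_succ by (auto simp: K_R_Image)
    qed
  qed
  have E_condition: "K_E `` {f x} = f ` (E `` {x} \<inter> U) \<longleftrightarrow> f ` (E `` {x} \<inter> U) = UNIV" for x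
    by (auto simp: K_E_def)
  show ?thesis
    unfolding frame_morphism_from_def using R_condition E_condition by (simp cong: ball_cong) blast
qed

lemma frame_morphism_to_K_surj:
  assumes "U \<subseteq> topspace X" "U \<noteq> {}" "frame_morphism_from X R E U K_top K_R K_E f"
  shows "f ` U = UNIV"
proof -
  obtain x where "x \<in> U"
    using assms(2) by blast
  then have "f ` (E `` {x} \<inter> U) = UNIV"
    using assms(3) unfolding frame_morphism_to_K_iff[OF assms(1)] by blast
  then show ?thesis
    by blast
qed

lemma K_morphism_Kb_cone:
  assumes "closed_upset X (R O E) U" "frame_morphism_from X R E U K_top K_R K_E f"
    and "w \<in> U" "f w = Kb"
  shows "R `` {w} \<subseteq> {x \<in> U. f x = Kb}"
  using assms closed_upset_R_closed
  unfolding frame_morphism_to_K_iff[OF closed_upset_subset_topspace[OF assms(1)]] by blast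

lemma kur_refutation_of_K_morphism:
  assumes U: "closed_upset X (R O E) U" "U \<noteq> {}"
    and f: "frame_morphism_from X R E U K_top K_R K_E f"
  shows "\<exists>P x. kur_refutation X R E P x"
proof -
  have U_sub: "U \<subseteq> topspace X"
    using U(1) by (rule closed_upset_subset_topspace)
  have cont: "continuous_map (subtopology X U) K_top f"
    and Kb_succ: "\<And>x. x \<in> U \<Longrightarrow> \<exists>y \<in> R `` {x} \<inter> U. f y = Kb"
    and E_onto: "\<And>x. x \<in> U \<Longrightarrow> f ` (E `` {x} \<inter> U) = UNIV"
    using f unfolding frame_morphism_to_K_iff[OF U_sub] by blast+
  have fibre_closed: "closedin X {x \<in> U. f x = k}" for k
    using U(1) cont closedin_fibre_K unfolding closed_upset_def by blast
  obtain C where C: "clopenin X C" "{x \<in> U. f x = Kb} \<subseteq> C" "C \<inter> {x \<in> U. f x = Ka} = {}"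
    by (rule stone_space_separation[OF stone fibre_closed fibre_closed]) auto
  obtain x where x: "x \<in> U" "f x = Ka"
    using frame_morphism_to_K_surj[OF U_sub U(2) f] by (metis UNIV_I imageE)
  have "kur_refutation X R E C x"
    unfolding kur_refutation_def
  proof (intro conjI ballI)
    show "clopenin X C" by (fact C(1))
    show "x \<in> topspace X"
      using x U_sub by blast
  next
    fix z assume "z \<in> (R O E) `` {x}"
    then have "z \<in> U"
      using U(1) x(1) unfolding closed_upset_def by blast
    then obtain w where "(z, w) \<in> R" "w \<in> U" "f w = Kb"
      using Kb_succ by blast
    then show "\<exists>w \<in> R `` {z}. R `` {w} \<subseteq> C"
      using K_morphism_Kb_cone[OF U(1) f] C(2) by blast
  next
    fix y assume "y \<in> R `` {x}"
    then have "Ka \<in> f ` (E `` {y} \<inter> U)"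
      using closed_upset_R_closed[OF U(1) x(1)] E_onto by blast
    then obtain z where "z \<in> E `` {y} \<inter> U" "f z = Ka"
      by (metis imageE)
    then show "\<not> E `` {y} \<subseteq> C"
      using C(3) by blast
  qed
  then show ?thesis by blast
qed

lemma kur_refutation_E_class_split:
  assumes refutation: "kur_refutation X R E P x0" and w: "(x0, w) \<in> R" "R `` {w} \<subseteq> P"
    and x: "x \<in> (R O E) `` {w}"
  shows "\<exists>v \<in> E `` {x} \<inter> (R O E) `` {w}. R `` {v} \<subseteq> P"
    and "\<exists>z \<in> E `` {x} \<inter> (R O E) `` {w}. z \<in> topspace X - P"
proof -
  obtain v where v: "(w, v) \<in> R" "(v, x) \<in> E"
    using x by blast
  have "v \<in> E `` {x} \<inter> (R O E) `` {w}"
    using v E_refl E_sym R_field by blast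
  moreover have "R `` {v} \<subseteq> P"
    using v(1) w(2) R_trans by blast
  ultimately show "\<exists>v \<in> E `` {x} \<inter> (R O E) `` {w}. R `` {v} \<subseteq> P"
    by blast
  have "\<not> E `` {v} \<subseteq> P"
    using refutation R_trans[OF w(1) v(1)] unfolding kur_refutation_def by blast
  then obtain z where "(v, z) \<in> E" "z \<notin> P"
    by blast
  then show "\<exists>z \<in> E `` {x} \<inter> (R O E) `` {w}. z \<in> topspace X - P"
    using v E_sym E_trans E_field by blast
qed

lemma K_morphism_of_kur_refutation:
  assumes refutation: "kur_refutation X R E P x0" and w: "(x0, w) \<in> R" "R `` {w} \<subseteq> P"
  defines "S \<equiv> {x \<in> topspace X. R `` {x} \<subseteq> P}"
  shows "frame_morphism_from X R E ((R O E) `` {w}) K_top K_R K_E (\<lambda>x. if x \<in> S then Kb else Ka)"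
    (is "frame_morphism_from X R E ?U K_top K_R K_E ?f")
proof -
  have U: "closed_upset X (R O E) ?U"
    using closed_upset_Image R_field w(1) by blast
  then have U_sub: "?U \<subseteq> topspace X"
    by (rule closed_upset_subset_topspace)
  have "clopenin X S"
    using refutation clopenin_sem[of "\<lambda>_. P" "Box pp"]
    unfolding S_def kur_refutation_def by simp
  then have cont: "continuous_map (subtopology X ?U) K_top ?f"
    by (rule continuous_map_indicator_K)
  have S_up: "y \<in> S" if "x \<in> S" "(x, y) \<in> R" for x y
    using that R_trans R_field unfolding S_def by blast
  have Kb_succ: "\<exists>y \<in> R `` {x} \<inter> ?U. ?f y = Kb" if x: "x \<in> ?U" for x
  proof -
    have "x \<in> (R O E) `` {x0}"
      using x w(1) R_trans by blast
    then obtain y where "(x, y) \<in> R" "R `` {y} \<subseteq> P"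
      using refutation unfolding kur_refutation_def by blast
    moreover from this have "y \<in> ?U"
      using closed_upset_R_closed[OF U x] by blast
    ultimately show ?thesis
      using R_field unfolding S_def by auto
  qed
  have E_onto: "?f ` (E `` {x} \<inter> ?U) = UNIV" if x: "x \<in> ?U" for x
  proof -
    obtain v where v: "v \<in> E `` {x} \<inter> ?U" "R `` {v} \<subseteq> P"
      using kur_refutation_E_class_split(1)[OF refutation w x] by blast
    obtain z where z: "z \<in> E `` {x} \<inter> ?U" "z \<in> topspace X - P"
      using kur_refutation_E_class_split(2)[OF refutation w x] by blast
    have "v \<in> S"
      using v U_sub unfolding S_def by blast
    then have Kb: "Kb \<in> ?f ` (E `` {x} \<inter> ?U)"
      by (intro rev_image_eqI[OF v(1)]) simp
    have "z \<notin> S"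
      using z R_refl unfolding S_def by blast
    then have Ka: "Ka \<in> ?f ` (E `` {x} \<inter> ?U)"
      by (intro rev_image_eqI[OF z(1)]) simp
    show ?thesis
      using Ka Kb UNIV_kpt_eq_iff by metis
  qed
  show ?thesis
    unfolding frame_morphism_to_K_iff[OF U_sub] using cont S_up Kb_succ E_onto by auto
qed

lemma K_morphism_onto_of_kur_refutation:
  assumes refutation: "kur_refutation X R E P x0"
  shows "\<exists>U f. U \<subseteq> topspace X \<and> closed_upset X (R O E) U \<and>
           frame_morphism_from X R E U K_top K_R K_E f \<and> f ` U = UNIV"
proof -
  have "x0 \<in> (R O E) `` {x0}"
    using refutation R_refl E_refl unfolding kur_refutation_def by blast
  then obtain w where w: "(x0, w) \<in> R" "R `` {w} \<subseteq> P"
    using refutation unfolding kur_refutation_def by blast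
  let ?U = "(R O E) `` {w}"
  have U: "closed_upset X (R O E) ?U"
    using closed_upset_Image R_field w(1) by blast
  then have U_sub: "?U \<subseteq> topspace X"
    by (rule closed_upset_subset_topspace)
  have "w \<in> ?U"
    using R_refl E_refl R_field w(1) by blast
  moreover note f = K_morphism_of_kur_refutation[OF refutation w]
  ultimately show ?thesis
    using U U_sub frame_morphism_to_K_surj by blast
qed

lemma ex_K_morphism_onto_iff_kur_refutation:
  "(\<exists>U f. U \<subseteq> topspace X \<and> closed_upset X (R O E) U \<and>
      frame_morphism_from X R E U K_top K_R K_E f \<and> f ` U = UNIV) \<longleftrightarrow>
   (\<exists>P x. kur_refutation X R E P x)"
proof
  assume "\<exists>U f. U \<subseteq> topspace X \<and> closed_upset X (R O E) U \<and>
      frame_morphism_from X R E U K_top K_R K_E f \<and> f ` U = UNIV"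
  then obtain U f where "closed_upset X (R O E) U" "U \<noteq> {}"
    and "frame_morphism_from X R E U K_top K_R K_E f"
    by fastforce
  then show "\<exists>P x. kur_refutation X R E P x"
    by (rule kur_refutation_of_K_morphism)
next
  assume "\<exists>P x. kur_refutation X R E P x"
  then show "\<exists>U f. U \<subseteq> topspace X \<and> closed_upset X (R O E) U \<and>
      frame_morphism_from X R E U K_top K_R K_E f \<and> f ` U = UNIV"
    using K_morphism_onto_of_kur_refutation by blast
qed

end

theorem theorem4p19:
  fixes X :: "'a topology" and R E :: "'a rel"
  assumes "descriptive_MS4_frame X R E"
  shows "frame_validates X R E LKur \<longleftrightarrow>
    \<not> (\<exists>U f. U \<subseteq> topspace X \<and> closed_upset X (R O E) U \<and>
            frame_morphism_from X R E U K_top K_R K_E f \<and> f ` U = UNIV)"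
proof -
  interpret descriptive_MS4 X R E
    using assms by unfold_locales
  show ?thesis
    unfolding ex_K_morphism_onto_iff_kur_refutation frame_validates_LKur_iff
    using not_frame_valid_kur_axiom_iff by blast
qed

end
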